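(* Let $q$ be a positive multiple of $24$. Then for every $m\in\mathbb{Z}$ with $q\nmid 24m$, one has $|\widehat{f_q}(-m)|\le\frac1{\sqrt5}$.
   Context: $e(\theta):=e^{2\pi i\theta}$. For $f:\mathbb{Z}/q\mathbb{Z}\to\mathbb{C}$, $\widehat f(r):=\frac1q\sum_{x\in\mathbb{Z}/q\mathbb{Z}}f(x)e(-rx/q)$, and $f_q(t):=\#\{x\in\mathbb{Z}/q\mathbb{Z}:x^2=t\}$. *)

theory Defs
  imports "HOL-Analysis.Analysis"
begin

definition e :: "real \<Rightarrow> complex" where
  "e \<theta> = exp (2 * pi * \<i> * complex_of_real \<theta>)"

text \<open>A function on Z/qZ is represented as a function on int (only its values on the
  residues 0..q-1 matter). Fourier transform:
  hat f (r) = 1/q * sum over x in Z/qZ of f(x) e(-r x / q).\<close>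
definition fhat :: "int \<Rightarrow> (int \<Rightarrow> complex) \<Rightarrow> int \<Rightarrow> complex" where
  "fhat q f r = (1 / of_int q) * (\<Sum>x\<in>{0..<q}. f x * e (- of_int r * of_int x / of_int q))"

definition fq :: "int \<Rightarrow> int \<Rightarrow> complex" where
  "fq q t = of_nat (card {x \<in> {0..<q}. x ^ 2 mod q = t mod q})"

end

theory Submission imports Defs begin

text \<open>
  Grouping the residues t by their square roots turns the Fourier coefficient into the
  quadratic Gauss sum G = \<Sum>x. e(m x^2/q), divided by q. Expanding |G|^2 and substituting
  x = y + h gives \<Sum>h e(m h^2/q) \<Sum>y e(2 m h y/q); the inner sum vanishes unless q divides
  2 m h, which happens for at most gcd(2m, q) residues h, so |G|^2 \<le> q gcd(2m, q). Finally
  the index q / gcd(2m, q) is at least 5, since otherwise it would divide 12 and q would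
  divide 24 m.
\<close>

lemma e_add: "e (a + b) = e a * e b"
  unfolding e_def by (simp add: distrib_left exp_add[symmetric])

lemma e_of_int: "e (of_int n) = 1"
  unfolding e_def using exp_integer_2pi[of "of_int n"]
  by (simp add: mult.commute mult.left_commute)

lemma norm_e: "norm (e t) = 1"
  unfolding e_def by (simp add: norm_exp)

lemma cnj_e: "cnj (e t) = e (- t)"
  unfolding e_def by (subst exp_cnj) simp

lemma e_of_nat_mult: "e (of_nat n * t) = e t ^ n"
  unfolding e_def by (simp add: exp_of_nat_mult[symmetric] algebra_simps)

lemma e_eq_1_imp_Ints:
  assumes "e t = 1"
  shows "t \<in> \<int>"
proof -
  from assms obtain n :: int where "Im (2 * pi * \<i> * complex_of_real t) = of_int (2 * n) * pi"
    unfolding e_def exp_eq_1 by blast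
  then have "t = of_int n" by simp
  then show ?thesis by simp
qed

lemma e_divide_cong_mod:
  assumes "a mod q = b mod q" and "q \<noteq> 0"
  shows "e (of_int a / of_int q) = e (of_int b / of_int q)"
proof -
  have "q dvd a - b" using assms(1) by (simp add: mod_eq_dvd_iff)
  then obtain k where "a - b = q * k" by (rule dvdE)
  then have "a = b + q * k" by simp
  then have "of_int a / of_int q = of_int b / of_int q + (of_int k :: real)"
    using assms(2) by (simp add: field_simps)
  then show ?thesis by (simp add: e_add e_of_int)
qed

lemma sum_e_linear:
  fixes q c :: int
  assumes "q > 0"
  shows "(\<Sum>y\<in>{0..<q}. e (of_int (c * y) / of_int q)) = (if q dvd c then of_int q else 0)"
proof (cases "q dvd c")
  case True
  then obtain k where "c = q * k" by blast
  then have "e (of_int (c * y) / of_int q) = 1" for y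
    using assms e_of_int[of "k * y"] by simp
  then show ?thesis using True assms by simp
next
  case False
  define z where "z = e (of_int c / of_int q)"
  have powers: "e (of_int (c * int n) / of_int q) = z ^ n" for n
    unfolding z_def e_of_nat_mult[symmetric] by (simp add: mult.commute)
  have "z \<noteq> 1"
  proof
    assume "z = 1"
    then have "of_int c / of_int q \<in> (\<int> :: real set)"
      unfolding z_def by (rule e_eq_1_imp_Ints)
    then obtain k where "of_int c / of_int q = (of_int k :: real)"
      by (auto elim: Ints_cases)
    then have "of_int c = (of_int (q * k) :: real)"
      using assms by (simp add: field_simps)
    then have "c = q * k" by linarith
    then show False using False by simp
  qed
  have "z ^ nat q = 1"
    using powers[of "nat q"] assms by (simp add: e_of_int)
  have "{0..<q} = int ` {..<nat q}"
    using assms by (simp add: image_int_atLeastLessThan lessThan_atLeast0)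
  then have "(\<Sum>y\<in>{0..<q}. e (of_int (c * y) / of_int q))
      = (\<Sum>n<nat q. e (of_int (c * int n) / of_int q))"
    by (simp add: sum.reindex)
  also have "\<dots> = (\<Sum>n<nat q. z ^ n)"
    by (simp only: powers)
  also have "\<dots> = 0"
    using \<open>z \<noteq> 1\<close> \<open>z ^ nat q = 1\<close> by (simp add: sum_gp_strict)
  finally show ?thesis
    using False by simp
qed

lemma bij_betw_add_mod:
  fixes q y :: int
  assumes "q > 0"
  shows "bij_betw (\<lambda>h. (y + h) mod q) {0..<q} {0..<q}"
proof (rule bij_betw_imageI)
  show "inj_on (\<lambda>h. (y + h) mod q) {0..<q}"
  proof (rule inj_onI)
    fix a b
    assume ab: "a \<in> {0..<q}" "b \<in> {0..<q}" "(y + a) mod q = (y + b) mod q"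
    have "a mod q = ((y + a) mod q - y) mod q" by (simp add: mod_diff_left_eq)
    also have "\<dots> = ((y + b) mod q - y) mod q" using ab by simp
    also have "\<dots> = b mod q" by (simp add: mod_diff_left_eq)
    finally show "a = b" using ab by simp
  qed
  show "(\<lambda>h. (y + h) mod q) ` {0..<q} = {0..<q}"
  proof
    show "(\<lambda>h. (y + h) mod q) ` {0..<q} \<subseteq> {0..<q}" using assms by auto
    show "{0..<q} \<subseteq> (\<lambda>h. (y + h) mod q) ` {0..<q}"
    proof
      fix x assume x: "x \<in> {0..<q}"
      then have "x = (y + (x - y) mod q) mod q" by (simp add: mod_add_right_eq)
      moreover have "(x - y) mod q \<in> {0..<q}" using assms by simp
      ultimately show "x \<in> (\<lambda>h. (y + h) mod q) ` {0..<q}" by blast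
    qed
  qed
qed

definition gauss_sum :: "int \<Rightarrow> int \<Rightarrow> complex" where
  "gauss_sum q m = (\<Sum>x\<in>{0..<q}. e (of_int (m * x\<^sup>2) / of_int q))"

lemma fhat_fq_eq_gauss_sum:
  fixes q m :: int
  assumes "q > 0"
  shows "fhat q (fq q) (- m) = gauss_sum q m / of_int q"
proof -
  let ?fibre = "\<lambda>t. {x \<in> {0..<q}. x\<^sup>2 mod q = t}"
  have "fq q t * e (- of_int (- m) * of_int t / of_int q)
      = (\<Sum>x\<in>?fibre t. e (of_int (m * (x\<^sup>2 mod q)) / of_int q))" if "t \<in> {0..<q}" for t
    using that by (simp add: fq_def)
  then have "(\<Sum>t\<in>{0..<q}. fq q t * e (- of_int (- m) * of_int t / of_int q))
      = (\<Sum>t\<in>{0..<q}. \<Sum>x\<in>?fibre t. e (of_int (m * (x\<^sup>2 mod q)) / of_int q))"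
    by (rule sum.cong[OF refl])
  also have "\<dots> = (\<Sum>x\<in>{0..<q}. e (of_int (m * (x\<^sup>2 mod q)) / of_int q))"
    using assms by (intro sum.group) auto
  also have "\<dots> = gauss_sum q m"
    unfolding gauss_sum_def
    using assms by (intro sum.cong refl e_divide_cong_mod) (simp_all add: mod_mult_right_eq)
  finally show ?thesis unfolding fhat_def by simp
qed

lemma norm_gauss_sum_square:
  fixes q m :: int
  assumes "q > 0"
  shows "complex_of_real ((norm (gauss_sum q m))\<^sup>2)
    = (\<Sum>h\<in>{0..<q}. e (of_int (m * h\<^sup>2) / of_int q)
        * (\<Sum>y\<in>{0..<q}. e (of_int (2 * m * h * y) / of_int q)))"
proof -
  let ?E = "\<lambda>k. e (of_int k / of_int q)"
  have shift: "?E (m * (((y + h) mod q)\<^sup>2 - y\<^sup>2)) = ?E (m * h\<^sup>2) * ?E (2 * m * h * y)" for h y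
  proof -
    have "((y + h) mod q)\<^sup>2 mod q = (y + h)\<^sup>2 mod q" by (rule power_mod)
    then have "(((y + h) mod q)\<^sup>2 - y\<^sup>2) mod q = ((y + h)\<^sup>2 - y\<^sup>2) mod q"
      by (metis mod_diff_left_eq)
    then have "(m * (((y + h) mod q)\<^sup>2 - y\<^sup>2)) mod q = (m * ((y + h)\<^sup>2 - y\<^sup>2)) mod q"
      by (metis mod_mult_right_eq)
    also have "m * ((y + h)\<^sup>2 - y\<^sup>2) = m * h\<^sup>2 + 2 * m * h * y"
      by (simp add: power2_eq_square algebra_simps)
    finally have "?E (m * (((y + h) mod q)\<^sup>2 - y\<^sup>2)) = ?E (m * h\<^sup>2 + 2 * m * h * y)"
      using assms by (intro e_divide_cong_mod) auto
    then show ?thesis by (simp add: add_divide_distrib e_add)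
  qed
  have inner: "(\<Sum>x\<in>{0..<q}. ?E (m * x\<^sup>2) * ?E (- (m * y\<^sup>2)))
      = (\<Sum>h\<in>{0..<q}. ?E (m * h\<^sup>2) * ?E (2 * m * h * y))" for y
  proof -
    have "(\<Sum>x\<in>{0..<q}. ?E (m * x\<^sup>2) * ?E (- (m * y\<^sup>2))) = (\<Sum>x\<in>{0..<q}. ?E (m * (x\<^sup>2 - y\<^sup>2)))"
      by (simp add: e_add[symmetric] diff_divide_distrib right_diff_distrib)
    also have "\<dots> = (\<Sum>h\<in>{0..<q}. ?E (m * (((y + h) mod q)\<^sup>2 - y\<^sup>2)))"
      by (rule sum.reindex_bij_betw[symmetric, OF bij_betw_add_mod[OF assms]])
    also have "\<dots> = (\<Sum>h\<in>{0..<q}. ?E (m * h\<^sup>2) * ?E (2 * m * h * y))"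
      by (simp only: shift)
    finally show ?thesis .
  qed
  have "complex_of_real ((norm (gauss_sum q m))\<^sup>2) = gauss_sum q m * cnj (gauss_sum q m)"
    by (rule complex_norm_square)
  also have "\<dots> = (\<Sum>x\<in>{0..<q}. \<Sum>y\<in>{0..<q}. ?E (m * x\<^sup>2) * ?E (- (m * y\<^sup>2)))"
    unfolding gauss_sum_def by (simp add: cnj_e sum_product)
  also have "\<dots> = (\<Sum>y\<in>{0..<q}. \<Sum>x\<in>{0..<q}. ?E (m * x\<^sup>2) * ?E (- (m * y\<^sup>2)))"
    by (rule sum.swap)
  also have "\<dots> = (\<Sum>y\<in>{0..<q}. \<Sum>h\<in>{0..<q}. ?E (m * h\<^sup>2) * ?E (2 * m * h * y))"
    by (simp only: inner)
  finally show ?thesis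
    by (subst (asm) sum.swap) (simp add: sum_distrib_left)
qed

lemma card_dvd_mult_le_gcd:
  fixes q a :: int
  assumes "q > 0"
  shows "card {h \<in> {0..<q}. q dvd a * h} \<le> nat (gcd a q)"
proof -
  define g where "g = gcd a q"
  define k where "k = q div g"
  have "g > 0" using assms unfolding g_def by simp
  have q_eq: "q = g * k" unfolding k_def g_def by simp
  then have "k > 0" using assms \<open>g > 0\<close> by (simp add: zero_less_mult_iff)
  obtain c where c: "a = g * c" unfolding g_def by (meson gcd_dvd1 dvdE)
  have "coprime k c"
    using div_gcd_coprime[of a q] assms c \<open>g > 0\<close> unfolding k_def g_def
    by (metis coprime_commute gcd_pos_int less_irrefl nonzero_mult_div_cancel_left)
  have "{h \<in> {0..<q}. q dvd a * h} \<subseteq> (\<lambda>j. k * j) ` {0..<g}"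
  proof
    fix h assume h: "h \<in> {h \<in> {0..<q}. q dvd a * h}"
    then have "g * k dvd g * (c * h)" using q_eq c by (simp add: mult.assoc)
    then have "k dvd c * h" using \<open>g > 0\<close> by simp
    then have "k dvd h" using \<open>coprime k c\<close> by (simp add: coprime_dvd_mult_right_iff)
    then obtain j where j: "h = k * j" by blast
    then have "j \<in> {0..<g}"
      using h \<open>k > 0\<close> q_eq by (simp add: zero_le_mult_iff mult.commute)
    then show "h \<in> (\<lambda>j. k * j) ` {0..<g}" using j by blast
  qed
  then have "card {h \<in> {0..<q}. q dvd a * h} \<le> card ((\<lambda>j. k * j) ` {0..<g})"
    by (intro card_mono) auto
  also have "\<dots> \<le> card {0..<g}" by (rule card_image_le) simp
  finally show ?thesis unfolding g_def by simp
qed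

lemma norm_gauss_sum_square_le:
  fixes q m :: int
  assumes "q > 0"
  shows "(norm (gauss_sum q m))\<^sup>2 \<le> of_int q * of_int (gcd (2 * m) q)"
proof -
  let ?D = "{h \<in> {0..<q}. q dvd 2 * m * h}"
  have "(norm (gauss_sum q m))\<^sup>2 = norm (complex_of_real ((norm (gauss_sum q m))\<^sup>2))"
    by (simp only: norm_of_real) simp
  also have "\<dots> \<le> (\<Sum>h\<in>{0..<q}. norm (\<Sum>y\<in>{0..<q}. e (of_int (2 * m * h * y) / of_int q)))"
    unfolding norm_gauss_sum_square[OF assms]
    by (rule order.trans[OF norm_sum]) (simp add: norm_mult norm_e)
  also have "\<dots> = (\<Sum>h\<in>{0..<q}. if q dvd 2 * m * h then of_int q else 0)"
    by (intro sum.cong refl) (simp only: sum_e_linear[OF assms], simp)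
  also have "\<dots> = (\<Sum>h\<in>?D. of_int q)"
    by (rule sum.inter_filter[symmetric]) simp
  also have "\<dots> = of_int q * of_nat (card ?D)"
    by simp
  also have "\<dots> \<le> of_int q * of_int (gcd (2 * m) q)"
    using card_dvd_mult_le_gcd[OF assms, of "2 * m"] assms
    by (intro mult_left_mono) (simp_all add: le_nat_iff)
  finally show ?thesis .
qed

lemma five_mult_gcd_le:
  fixes q a :: int
  assumes "q > 0" and "\<not> q dvd 12 * a"
  shows "5 * gcd a q \<le> q"
proof (rule ccontr)
  assume "\<not> 5 * gcd a q \<le> q"
  define k where "k = q div gcd a q"
  have q_eq: "q = gcd a q * k" unfolding k_def by simp
  have "gcd a q > 0" using assms by simp
  have "0 < k"
    using q_eq assms(1) \<open>gcd a q > 0\<close> zero_less_mult_pos by metis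
  moreover have "k < 5"
    using q_eq \<open>gcd a q > 0\<close> \<open>\<not> 5 * gcd a q \<le> q\<close>
    by (metis mult.commute mult_le_cancel_left_pos not_le)
  ultimately have "k = 1 \<or> k = 2 \<or> k = 3 \<or> k = 4" by linarith
  then have "k dvd 12" by auto
  then have "gcd a q * k dvd a * 12"
    by (intro mult_dvd_mono) simp_all
  then have "q dvd 12 * a"
    using q_eq by (simp add: mult.commute)
  then show False using assms(2) by simp
qed

theorem lemma3p4:
  fixes q m :: int
  assumes "q > 0" and "24 dvd q" and "\<not> q dvd 24 * m"
  shows "norm (fhat q (fq q) (- m)) \<le> 1 / sqrt 5"
proof -
  have "5 * gcd (2 * m) q \<le> q"
    using five_mult_gcd_le[of q "2 * m"] assms(1,3) by simp
  then have "of_int (gcd (2 * m) q) \<le> (of_int q / 5 :: real)"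
    by simp
  then have "of_int q * of_int (gcd (2 * m) q) \<le> of_int q * (of_int q / 5 :: real)"
    using assms(1) by (intro mult_left_mono) simp_all
  then have "(norm (gauss_sum q m))\<^sup>2 \<le> of_int q * (of_int q / 5)"
    using norm_gauss_sum_square_le[OF assms(1), of m] by linarith
  then have "(norm (gauss_sum q m) / of_int q)\<^sup>2 \<le> 1 / 5"
    using assms(1) by (simp add: power_divide field_simps power2_eq_square)
  then have "norm (gauss_sum q m) / of_int q \<le> sqrt (1 / 5)"
    by (rule real_le_rsqrt)
  then show ?thesis
    using assms(1) by (simp add: fhat_fq_eq_gauss_sum norm_divide real_sqrt_divide)
qed

end
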